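(* Let $A$ be a unital Banach algebra with unit $1_A$, and let $(c_n)_{n\in \mathbb{Z}}\subset A$ be a cosine sequence, i.e. $c_0=1_A$ and $c_{m+n}+c_{m-n}=2c_mc_n$ for all $m,n\in\mathbb{Z}$. Assume $\sup_{n\ge 1}\Vert c_n\Vert \le M<+\infty$. Then $\sup_{p\ge 1}\Vert c_n^p\Vert \le M$ for every $n\ge 1$, and $$\Vert \arccos(c_n)\Vert \le \frac{M+1}{2}\pi \quad (n\ge 1).$$ Moreover $\mathrm{Spec}(c_n)\subset[-1,1]$ for every $n\in\mathbb{N}$, and for every character $\chi$ on $A$ we have $\chi(c_n)=\cos(n\beta_\chi)$ for $n\ge 1$, where $\beta_\chi=\chi(\arccos(c_1))=\arccos(\chi(c_1))\in[0,\pi]$.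
   Context: For an element $x$ of a unital Banach algebra $A$ with $\sup_{n\ge 1}\Vert x^n\Vert<+\infty$, $\arccos(x)$ is defined by the (convergent) series $\arccos(x)=\frac{\pi}{2}1_A-\sum_{n=0}^{\infty}\frac{(2n)!}{2^{2n}(2n+1)(n!)^2}x^{2n+1}$. A character on $A$ is a nonzero algebra homomorphism $A\to\mathbb{C}$. For complex numbers, $\arccos$ denotes the usual function $[-1,1]\to[0,\pi]$. *)

theory Defs
  imports "HOL-Analysis.Analysis"
begin

class complex_banach_algebra_1 = real_normed_algebra_1 + banach +
  fixes cscale :: "complex \<Rightarrow> 'a \<Rightarrow> 'a"
  assumes cscale_of_real: "cscale (complex_of_real r) x = scaleR r x"
    and cscale_add_right: "cscale a (x + y) = cscale a x + cscale a y"
    and cscale_add_left: "cscale (a + b) x = cscale a x + cscale b x"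
    and cscale_assoc: "cscale a (cscale b x) = cscale (a * b) x"
    and cscale_one: "cscale 1 x = x"
    and norm_cscale: "norm (cscale a x) = cmod a * norm x"
    and cscale_mult_left: "cscale a (x * y) = cscale a x * y"
    and cscale_mult_right: "cscale a (x * y) = x * cscale a y"

definition alg_invertible :: "'a::monoid_mult \<Rightarrow> bool" where
  "alg_invertible x \<longleftrightarrow> (\<exists>y. x * y = 1 \<and> y * x = 1)"

definition spec :: "'a::complex_banach_algebra_1 \<Rightarrow> complex set" where
  "spec x = {l. \<not> alg_invertible (cscale l 1 - x)}"

definition character :: "('a::complex_banach_algebra_1 \<Rightarrow> complex) \<Rightarrow> bool" where
  "character chi \<longleftrightarrow>
     (\<forall>x y. chi (x + y) = chi x + chi y) \<and>
     (\<forall>c x. chi (cscale c x) = c * chi x) \<and>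
     (\<forall>x y. chi (x * y) = chi x * chi y) \<and>
     (\<exists>x. chi x \<noteq> 0)"

definition cosine_seq :: "(int \<Rightarrow> 'a::ring_1) \<Rightarrow> bool" where
  "cosine_seq c \<longleftrightarrow> c 0 = 1 \<and> (\<forall>m n. c (m + n) + c (m - n) = 2 * c m * c n)"

definition arcsin_coeff :: "nat \<Rightarrow> real" where
  "arcsin_coeff n = fact (2*n) / (2 ^ (2*n) * real (2*n+1) * (fact n)^2)"

text \<open>arccos in a Banach algebra, via the series (meaningful when the powers are bounded).\<close>
definition ba_arccos :: "'a::complex_banach_algebra_1 \<Rightarrow> 'a" where
  "ba_arccos x = scaleR (pi/2) 1 - (\<Sum>n. scaleR (arcsin_coeff n) (x ^ (2*n+1)))"

end

theory Submission
  imports Defs "HOL-Analysis.Kronecker_Approximation_Theorem"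
begin

text \<open>The sequence \<open>c\<^sub>n\<close> behaves like \<open>cos (n \<beta>)\<close>. With \<open>G(t) = \<Sum> t\<^sup>k c\<^sub>k\<close> one has
  \<open>(1 - 2t c\<^sub>1 + t\<^sup>2) G(t) = 1 - t c\<^sub>1\<close> for \<open>|t| < 1\<close>, so \<open>1 - 2t c\<^sub>1 + t\<^sup>2\<close> is invertible on the open
  unit disc; through the Joukowski map \<open>t \<mapsto> (t + 1/t)/2\<close> this puts the spectrum of \<open>c\<^sub>1\<close> into
  \<open>[-1,1]\<close>, and the same holds for every \<open>c\<^sub>n\<close> because \<open>k \<mapsto> c\<^sub>k\<^sub>n\<close> is again a cosine sequence.
  On the other hand \<open>1 - 2t c\<^sub>1 + t\<^sup>2\<close> must be singular somewhere on the unit circle, which yields a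
  spectral value \<open>cos \<beta>\<close> of \<open>c\<^sub>1\<close>; then \<open>cos (n \<beta>)\<close> is a spectral value of \<open>c\<^sub>n\<close>, so
  \<open>|cos (n \<beta>)| \<le> M\<close> for all \<open>n \<ge> 1\<close>, and Dirichlet's approximation theorem forces \<open>M \<ge> 1\<close>.
  Given \<open>M \<ge> 1\<close>, the product formula \<open>c\<^sub>n c\<^sub>m = (c\<^sub>n\<^sub>+\<^sub>m + c\<^sub>n\<^sub>-\<^sub>m)/2\<close> bounds \<open>\<parallel>c\<^sub>n\<^sup>p\<parallel>\<close> by \<open>M\<close>, and
  the arcsine series then gives \<open>\<parallel>arccos c\<^sub>n\<parallel> \<le> (M + 1) \<pi> / 2\<close>. A character \<open>\<chi>\<close> maps \<open>c\<^sub>1\<close> into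
  its spectrum, commutes with the arcsine series, and turns \<open>c\<^sub>n\<^sub>+\<^sub>1 = 2 c\<^sub>1 c\<^sub>n - c\<^sub>n\<^sub>-\<^sub>1\<close> into the
  recursion of \<open>cos (n \<beta>\<^sub>\<chi>)\<close>.\<close>

lemma cscale_zero_right [simp]: "cscale a (0::'a::complex_banach_algebra_1) = 0"
  using cscale_add_right[of a "0::'a" 0] by simp

lemma cscale_zero_left [simp]: "cscale 0 (x::'a::complex_banach_algebra_1) = 0"
  using cscale_of_real[of 0 x] by simp

lemma cscale_minus_right: "cscale a (- x) = - cscale a (x::'a::complex_banach_algebra_1)"
  using cscale_add_right[of a "-x" x] by (simp add: eq_neg_iff_add_eq_0)

lemma cscale_diff_right: "cscale a (x - y) = cscale a x - cscale a (y::'a::complex_banach_algebra_1)"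
  using cscale_add_right[of a x "-y"] by (simp add: cscale_minus_right)

lemma cscale_minus_left: "cscale (- a) x = - cscale a (x::'a::complex_banach_algebra_1)"
  using cscale_add_left[of "-a" a x] by (simp add: eq_neg_iff_add_eq_0)

lemma cscale_diff_left: "cscale (a - b) x = cscale a x - cscale b (x::'a::complex_banach_algebra_1)"
  using cscale_add_left[of a "-b" x] by (simp add: cscale_minus_left)

lemma cscale_one_mult: "cscale a 1 * x = cscale a (x::'a::complex_banach_algebra_1)"
  using cscale_mult_left[of a 1 x] by simp

lemma mult_cscale_one: "x * cscale a 1 = cscale a (x::'a::complex_banach_algebra_1)"
  using cscale_mult_right[of a x 1] by simp

lemma cscale_of_real_one: "cscale (of_real r) (1::'a::complex_banach_algebra_1) = of_real r"
  unfolding cscale_of_real by (simp add: of_real_def)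

lemma cscale_numeral: "cscale (numeral k) x = numeral k * (x::'a::complex_banach_algebra_1)"
  using cscale_of_real[of "numeral k" x] by (simp add: scaleR_conv_of_real)

lemma scaleR_cscale: "scaleR r (cscale a x) = cscale (of_real r * a) (x::'a::complex_banach_algebra_1)"
  by (subst cscale_of_real[symmetric]) (rule cscale_assoc)

lemma cscale_scaleR: "cscale a (scaleR r x) = cscale (a * of_real r) (x::'a::complex_banach_algebra_1)"
  by (subst cscale_of_real[symmetric]) (rule cscale_assoc)

lemma bounded_linear_cscale: "bounded_linear (cscale a :: 'a::complex_banach_algebra_1 \<Rightarrow> 'a)"
  by (rule bounded_linear_intro[where K="cmod a"])
     (auto simp: cscale_add_right cscale_scaleR scaleR_cscale mult.commute norm_cscale)

lemma bounded_linear_cscale_left: "bounded_linear (\<lambda>a. cscale a (x::'a::complex_banach_algebra_1))"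
proof (rule bounded_linear_intro[where K="norm x"])
  fix r :: real and b :: complex
  show "cscale (r *\<^sub>R b) x = r *\<^sub>R cscale b x"
    by (simp add: scaleR_cscale scaleR_conv_of_real[of r b])
qed (auto simp: cscale_add_left norm_cscale)

lemma cscale_sum_left: "cscale (sum f J) (x::'a::complex_banach_algebra_1) = (\<Sum>j\<in>J. cscale (f j) x)"
  by (induction J rule: infinite_finite_induct) (auto simp: cscale_add_left)

section \<open>Inverses\<close>

definition ainv :: "'a::monoid_mult \<Rightarrow> 'a" where
  "ainv x = (THE y. x * y = 1 \<and> y * x = 1)" \<comment> \<open>unspecified unless \<open>x\<close> is invertible\<close>

lemma right_inverse_eq_left_inverse: "(x::'a::monoid_mult) * y = 1 \<Longrightarrow> z * x = 1 \<Longrightarrow> y = z"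
  by (metis mult.assoc mult_1 mult_1_right)

lemma ainv_eq: "(x::'a::monoid_mult) * y = 1 \<Longrightarrow> y * x = 1 \<Longrightarrow> ainv x = y"
  unfolding ainv_def by (rule the_equality) (auto dest: right_inverse_eq_left_inverse)

lemma ainv_inverse:
  assumes "alg_invertible x" shows "x * ainv x = 1" "ainv x * x = 1"
proof -
  obtain y where "x * y = 1" "y * x = 1" using assms unfolding alg_invertible_def by blast
  with ainv_eq show "x * ainv x = 1" "ainv x * x = 1" by auto
qed

lemma neumann_series:
  fixes y :: "'a::{real_normed_algebra_1,banach}"
  assumes "norm y < 1"
  shows "(1 - y) * (\<Sum>n. y^n) = 1" "(\<Sum>n. y^n) * (1 - y) = 1"
    "norm ((\<Sum>n. y^n) - 1) \<le> norm y / (1 - norm y)"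
proof -
  have s: "summable (\<lambda>n. y^n)" by (rule complete_algebra_summable_geometric[OF assms])
  have h: "(\<Sum>n. y ^ Suc n) = (\<Sum>n. y^n) - 1"
    using suminf_split_head[OF s] by simp
  have "y * (\<Sum>n. y^n) = (\<Sum>n. y ^ Suc n)"
    using suminf_mult[OF s, of y] by simp
  then show "(1 - y) * (\<Sum>n. y^n) = 1" using h by (simp add: algebra_simps)
  have "(\<Sum>n. y^n) * y = (\<Sum>n. y ^ Suc n)"
    by (simp only: suminf_mult2[OF s] power_Suc2)
  then show "(\<Sum>n. y^n) * (1 - y) = 1" using h by (simp add: algebra_simps)
  have g: "(\<lambda>n. norm y ^ Suc n) sums (norm y * (1 / (1 - norm y)))"
    using sums_mult[OF geometric_sums[of "norm y"], of "norm y"] assms by simp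
  have "norm (\<Sum>n. y ^ Suc n) \<le> (\<Sum>n. norm y ^ Suc n)"
    by (rule norm_suminf_le[OF norm_power_ineq sums_summable[OF g]])
  also have "\<dots> = norm y / (1 - norm y)" using sums_unique[OF g] by simp
  finally show "norm ((\<Sum>n. y^n) - 1) \<le> norm y / (1 - norm y)" using h by simp
qed

lemma alg_invertible_cscale_iff:
  fixes x :: "'a::complex_banach_algebra_1"
  assumes "a \<noteq> 0" shows "alg_invertible (cscale a x) \<longleftrightarrow> alg_invertible x"
proof -
  have *: "alg_invertible (cscale b y)" if b: "b \<noteq> 0" and y: "alg_invertible y" for b and y :: 'a
  proof -
    obtain z where "y * z = 1" "z * y = 1" using y unfolding alg_invertible_def by blast
    then have "cscale b y * cscale (1/b) z = 1" "cscale (1/b) z * cscale b y = 1"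
      using b
      by (simp_all add: cscale_mult_left[symmetric] cscale_mult_right[symmetric] cscale_assoc cscale_one)
    then show ?thesis unfolding alg_invertible_def by blast
  qed
  from *[of "1/a" "cscale a x"] *[of a x] assms show ?thesis
    by (auto simp: cscale_assoc cscale_one)
qed

lemma ainv_cscale:
  fixes x :: "'a::complex_banach_algebra_1"
  assumes "a \<noteq> 0" "alg_invertible x"
  shows "ainv (cscale a x) = cscale (1/a) (ainv x)"
  using assms ainv_inverse[OF assms(2)]
  by (intro ainv_eq)
     (simp_all add: cscale_mult_left[symmetric] cscale_mult_right[symmetric] cscale_assoc cscale_one)

lemma alg_invertible_cscale_one_diff:
  fixes x :: "'a::complex_banach_algebra_1"
  assumes "norm x < cmod l"
  shows "alg_invertible (cscale l 1 - x)"
proof -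
  have l: "l \<noteq> 0" using assms norm_ge_zero[of x] by auto
  have "norm (cscale (1/l) x) < 1" using assms l by (simp add: norm_cscale norm_divide field_simps)
  then have "alg_invertible (1 - cscale (1/l) x)"
    using neumann_series(1,2) unfolding alg_invertible_def by blast
  moreover have "cscale l 1 - x = cscale l (1 - cscale (1/l) x)"
    using l by (simp add: cscale_diff_right cscale_assoc cscale_one)
  ultimately show ?thesis using alg_invertible_cscale_iff[OF l] by metis
qed

lemma ainv_near:
  fixes a b x :: "'a::{real_normed_algebra_1,banach}"
  assumes ab: "a * b = 1" "b * a = 1" and small: "norm b * norm (x - a) < 1/2"
  shows "norm (ainv x - b) \<le> 2 * norm b ^ 2 * norm (x - a)"
proof -
  define y where "y = b * (a - x)"
  have ny: "norm y \<le> norm b * norm (x - a)"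
    unfolding y_def using norm_mult_ineq[of b "a - x"] by (simp add: norm_minus_commute)
  with small have ny1: "norm y < 1/2" by linarith
  define S where "S = (\<Sum>n. y^n)"
  have S: "(1 - y) * S = 1" "S * (1 - y) = 1" "norm (S - 1) \<le> norm y / (1 - norm y)"
    using neumann_series[of y] ny1 unfolding S_def by auto
  have xa: "x = a * (1 - y)"
    using ab by (simp add: y_def right_diff_distrib mult.assoc[symmetric])
  have "x * (S * b) = a * ((1 - y) * S) * b" "(S * b) * x = S * (b * a) * (1 - y)"
    by (simp_all only: xa mult.assoc)
  then have "x * (S * b) = 1" "(S * b) * x = 1" by (simp_all add: S ab)
  then have "ainv x = S * b" by (rule ainv_eq)
  then have "norm (ainv x - b) = norm ((S - 1) * b)" by (simp add: algebra_simps)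
  also have "\<dots> \<le> norm (S - 1) * norm b" by (rule norm_mult_ineq)
  also have "\<dots> \<le> (2 * norm y) * norm b"
  proof (rule mult_right_mono)
    have "norm y / (1 - norm y) \<le> norm y / (1/2)"
      by (rule divide_left_mono) (use ny1 in auto)
    with S(3) show "norm (S - 1) \<le> 2 * norm y" by simp
  qed simp
  also have "\<dots> \<le> 2 * (norm b * norm (x - a)) * norm b"
    using ny by (intro mult_right_mono) auto
  finally show ?thesis by (simp add: power2_eq_square mult_ac)
qed

lemma isCont_ainv:
  fixes a :: "'a::{real_normed_algebra_1,banach}"
  assumes "alg_invertible a"
  shows "isCont ainv a"
proof -
  define b where "b = ainv a"
  have ab: "a * b = 1" "b * a = 1" using ainv_inverse[OF assms] by (auto simp: b_def)
  have "((\<lambda>x. norm b * norm (x - a)) \<longlongrightarrow> 0) (at a)"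
    by (intro tendsto_eq_intros) auto
  then have "eventually (\<lambda>x. norm b * norm (x - a) < 1/2) (at a)"
    by (rule order_tendstoD) simp
  then have "eventually (\<lambda>x. norm (ainv x - b) \<le> 2 * norm b ^ 2 * norm (x - a)) (at a)"
    by eventually_elim (rule ainv_near[OF ab])
  moreover have "((\<lambda>x. 2 * norm b ^ 2 * norm (x - a)) \<longlongrightarrow> 0) (at a)"
    by (intro tendsto_eq_intros) auto
  ultimately have "((\<lambda>x. ainv x - b) \<longlongrightarrow> 0) (at a)"
    by (rule Lim_null_comparison)
  then show ?thesis unfolding isCont_def b_def by (rule LIM_zero_cancel)
qed

lemma continuous_on_ainv:
  fixes f :: "'b::topological_space \<Rightarrow> 'a::{real_normed_algebra_1,banach}"
  assumes "continuous_on S f" "\<And>t. t \<in> S \<Longrightarrow> alg_invertible (f t)"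
  shows "continuous_on S (\<lambda>t. ainv (f t))"
proof -
  have "continuous_on (f ` S) ainv"
    by (rule continuous_at_imp_continuous_on) (use assms(2) isCont_ainv in auto)
  then show ?thesis by (rule continuous_on_compose2[OF _ assms(1)]) auto
qed

section \<open>Characters\<close>

context
  fixes chi :: "'a::complex_banach_algebra_1 \<Rightarrow> complex"
  assumes chi: "character chi"
begin

lemma character_add: "chi (x + y) = chi x + chi y"
  using chi unfolding character_def by blast

lemma character_cscale: "chi (cscale l x) = l * chi x"
  using chi unfolding character_def by blast

lemma character_mult: "chi (x * y) = chi x * chi y"
  using chi unfolding character_def by blast

lemma character_one: "chi 1 = 1"
proof -
  obtain x where "chi x \<noteq> 0" using chi unfolding character_def by blast
  with character_mult[of x 1] show ?thesis by simp
qed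

lemma character_diff: "chi (x - y) = chi x - chi y"
  using character_add[of "x - y" y] by simp

lemma character_scaleR: "chi (scaleR r x) = of_real r * chi x"
  using character_cscale[of "of_real r" x] by (simp add: cscale_of_real)

lemma character_of_real: "chi (of_real r) = of_real r"
  using character_scaleR[of r 1] character_one by (simp add: of_real_def)

lemma character_power: "chi (x ^ n) = chi x ^ n"
  by (induction n) (auto simp: character_one character_mult)

lemma character_in_spec: "chi x \<in> spec x"
  unfolding spec_def alg_invertible_def
proof clarify
  fix y assume "(cscale (chi x) 1 - x) * y = 1"
  then have "chi ((cscale (chi x) 1 - x) * y) = 1" by (simp add: character_one)
  then show False by (simp add: character_mult character_diff character_cscale character_one)
qed

lemma norm_character_le: "cmod (chi x) \<le> norm x"
proof (rule ccontr)
  assume "\<not> cmod (chi x) \<le> norm x"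
  then have "alg_invertible (cscale (chi x) 1 - x)" by (intro alg_invertible_cscale_one_diff) simp
  with character_in_spec show False unfolding spec_def by simp
qed

lemma bounded_linear_character: "bounded_linear chi"
proof (rule bounded_linear_intro[where K=1])
  show "chi (r *\<^sub>R x) = r *\<^sub>R chi x" for r x
    by (simp add: character_scaleR scaleR_conv_of_real[of r "chi x"])
qed (auto simp: character_add norm_character_le)

end

section \<open>Cosine sequences\<close>

context
  fixes c :: "int \<Rightarrow> 'a::real_algebra_1"
  assumes c: "cosine_seq c"
begin

lemma cosine_seq_0: "c 0 = 1"
  using c unfolding cosine_seq_def by blast

lemma cosine_seq_add_diff: "c (m + n) + c (m - n) = 2 * c m * c n"
  using c unfolding cosine_seq_def by blast

lemma cosine_seq_minus: "c (- n) = c n"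
  using cosine_seq_add_diff[of 0 n] by (simp add: cosine_seq_0 mult_2)

lemma cosine_seq_mult: "c m * c n = scaleR (1/2) (c (m + n) + c (m - n))"
proof -
  have "c (m + n) + c (m - n) = 2 *\<^sub>R (c m * c n)"
    by (simp add: cosine_seq_add_diff scaleR_2 mult_2 distrib_right)
  then show ?thesis by simp
qed

lemma cosine_seq_commute: "c m * c n = c n * c m"
  using cosine_seq_minus[of "m - n"] by (simp add: cosine_seq_mult add.commute)

lemma cosine_seq_rec: "2 * c 1 * c k = c (k + 1) + c (k - 1)"
  using cosine_seq_add_diff[of k 1] cosine_seq_commute[of k 1] by (simp add: mult.assoc)

end

lemma cosine_seq_dilate:
  fixes c :: "int \<Rightarrow> 'a::real_algebra_1"
  assumes "cosine_seq c" shows "cosine_seq (\<lambda>k. c (k * n))"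
  unfolding cosine_seq_def
  using cosine_seq_0[OF assms] cosine_seq_add_diff[OF assms]
  by (simp add: algebra_simps)

lemma norm_cosine_seq_le_max:
  fixes c :: "int \<Rightarrow> 'a::real_normed_algebra_1"
  assumes "cosine_seq c" and "\<forall>n\<ge>1. norm (c n) \<le> M"
  shows "norm (c k) \<le> max M 1"
proof -
  have "c \<bar>k\<bar> = c k" using cosine_seq_minus[OF assms(1), of k] by (cases "k \<ge> 0") auto
  moreover have "norm (c \<bar>k\<bar>) \<le> M" if "k \<noteq> 0" using assms(2) that by simp
  ultimately show ?thesis by (cases "k = 0") (auto simp: cosine_seq_0[OF assms(1)])
qed

section \<open>The generating function and the spectrum of \<open>c\<^sub>1\<close>\<close>

definition cos_gen :: "(int \<Rightarrow> 'a::complex_banach_algebra_1) \<Rightarrow> complex \<Rightarrow> 'a" where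
  "cos_gen c t = (\<Sum>k. cscale (t^k) (c (int k)))"

definition cos_den :: "(int \<Rightarrow> 'a::complex_banach_algebra_1) \<Rightarrow> complex \<Rightarrow> 'a" where
  "cos_den c t = 1 - cscale (2*t) (c 1) + cscale (t^2) 1"

text \<open>For \<open>|t| < 1\<close> this is \<open>\<Sum>\<^sub>k\<^sub>\<in>\<^sub>\<int> t\<^bsup>|k|\<^esup> c\<^sub>k = (1 - t\<^sup>2) / (1 - 2 t c\<^sub>1 + t\<^sup>2)\<close>, the Poisson kernel.\<close>

definition cos_poisson :: "(int \<Rightarrow> 'a::complex_banach_algebra_1) \<Rightarrow> complex \<Rightarrow> 'a" where
  "cos_poisson c t = 2 *\<^sub>R cos_gen c t - 1"

lemma cos_den_eq_cscale:
  assumes "t \<noteq> 0"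
  shows "cos_den c t = cscale (2*t) (cscale ((t + 1/t)/2) 1 - c 1)"
proof -
  have "2*t*((t + 1/t)/2) = 1 + t^2" using assms by (simp add: field_simps power2_eq_square)
  then show ?thesis
    by (simp add: cos_den_def cscale_diff_right cscale_assoc cscale_add_left cscale_one)
qed

lemma cos_den_reciprocal:
  assumes "t \<noteq> 0"
  shows "cos_den c t = cscale (t^2) (cos_den c (1/t))"
  using assms
  by (simp add: cos_den_def cscale_diff_right cscale_add_right cscale_assoc cscale_one
      field_simps power2_eq_square)

lemma one_minus_square_nonzero:
  fixes t :: complex assumes "cmod t < 1" shows "1 - t^2 \<noteq> 0"
proof
  assume "1 - t^2 = 0"
  then have "cmod t ^ 2 = 1" by (simp flip: norm_power)
  with assms power_less_one_iff[of "cmod t" 2] show False by simp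
qed

context
  fixes c :: "int \<Rightarrow> 'a::complex_banach_algebra_1" and K :: real
  assumes c: "cosine_seq c" and bounded: "\<And>k::nat. norm (c (int k)) \<le> K"
begin

lemma cos_gen_sums:
  assumes t: "cmod t < 1"
  shows "(\<lambda>k. cscale (t^k) (c (int k))) sums cos_gen c t"
proof -
  have "summable (\<lambda>k. K * cmod t ^ k)" using t by (intro summable_mult summable_geometric) simp
  then have "summable (\<lambda>k. cscale (t^k) (c (int k)))"
  proof (rule summable_comparison_test'[where N=0])
    fix n :: nat
    have "cmod t ^ n * norm (c (int n)) \<le> cmod t ^ n * K" by (rule mult_left_mono[OF bounded]) simp
    then show "norm (cscale (t^n) (c (int n))) \<le> K * cmod t ^ n"
      by (simp add: norm_cscale norm_power mult.commute)
  qed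
  then show ?thesis unfolding cos_gen_def by (rule summable_sums)
qed

lemma cos_den_mult_gen:
  assumes t: "cmod t < 1"
  shows "cos_den c t * cos_gen c t = 1 - cscale t (c 1)"
proof -
  define f where "f k = cscale (t^k) (c (int k))" for k
  define S where "S = cos_gen c t"
  have fS: "f sums S" unfolding f_def S_def by (rule cos_gen_sums[OF t])
  have "f 0 = 1" by (simp add: f_def cosine_seq_0[OF c] cscale_one)
  with fS have s1: "(\<lambda>k. f (Suc k)) sums (S - 1)"
    by (subst sums_Suc_iff) simp
  define g where "g k = cscale (t ^ Suc k) (c (int k - 1))" for k
  have "(\<lambda>k. cscale (t^2) (f k)) sums cscale (t^2) S"
    by (rule bounded_linear.sums[OF bounded_linear_cscale fS])
  moreover have "(\<lambda>k. g (Suc k)) = (\<lambda>k. cscale (t^2) (f k))"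
    by (rule ext) (simp add: g_def f_def cscale_assoc power2_eq_square mult.assoc)
  ultimately have "(\<lambda>k. g (Suc k)) sums cscale (t^2) S" by simp
  then have "g sums (cscale (t^2) S + g 0)" by (simp only: sums_Suc_iff)
  moreover have "g 0 = cscale t (c 1)" using cosine_seq_minus[OF c, of 1] by (simp add: g_def)
  ultimately have s2: "g sums (cscale (t^2) S + cscale t (c 1))" by simp
  have "(\<lambda>k. cscale (2*t) (c 1 * f k)) sums cscale (2*t) (c 1 * S)"
    by (rule bounded_linear.sums[OF bounded_linear_cscale sums_mult[OF fS]])
  moreover have "cscale (2*t) (c 1 * f k) = f (Suc k) + g k" for k
  proof -
    have "cscale (2*t) (c 1 * f k) = cscale (t ^ Suc k) (cscale 2 (c 1 * c (int k)))"
      by (simp add: f_def cscale_mult_right[symmetric] cscale_assoc mult_ac)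
    also have "cscale 2 (c 1 * c (int k)) = c (int k + 1) + c (int k - 1)"
      by (simp add: cscale_numeral cosine_seq_rec[OF c] mult.assoc[symmetric])
    finally show ?thesis by (simp add: f_def g_def cscale_add_right add.commute)
  qed
  ultimately have "(\<lambda>k. f (Suc k) + g k) sums cscale (2*t) (c 1 * S)" by simp
  then have "cscale (2*t) (c 1 * S) = (S - 1) + (cscale (t^2) S + cscale t (c 1))"
    using sums_add[OF s1 s2] sums_unique2 by blast
  then show ?thesis
    by (simp add: S_def[symmetric] cos_den_def algebra_simps cscale_mult_left[symmetric] cscale_one_mult)
qed

lemma cos_gen_commute:
  assumes t: "cmod t < 1"
  shows "cos_gen c t * c 1 = c 1 * cos_gen c t"
proof -
  have "(\<lambda>k. cscale (t^k) (c (int k)) * c 1) = (\<lambda>k. c 1 * cscale (t^k) (c (int k)))"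
    by (simp add: cscale_mult_left[symmetric] cscale_mult_right[symmetric] cosine_seq_commute[OF c])
  then show ?thesis
    using sums_mult2[OF cos_gen_sums[OF t]] sums_mult[OF cos_gen_sums[OF t]] sums_unique2 by metis
qed

lemma cos_den_mult_poisson:
  assumes t: "cmod t < 1"
  shows "cos_den c t * cos_poisson c t = cscale (1 - t^2) 1"
    "cos_poisson c t * cos_den c t = cscale (1 - t^2) 1"
proof -
  have two: "(2::real) *\<^sub>R (1::'a) = 2" by (simp add: scaleR_conv_of_real)
  have "cos_den c t * cos_poisson c t = 2 *\<^sub>R (cos_den c t * cos_gen c t) - cos_den c t"
    by (simp add: cos_poisson_def right_diff_distrib)
  also have "\<dots> = 2 *\<^sub>R (1 - cscale t (c 1)) - cos_den c t" by (simp only: cos_den_mult_gen[OF t])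
  also have "\<dots> = cscale (1 - t^2) 1"
    by (simp add: cos_den_def algebra_simps scaleR_cscale cscale_diff_left cscale_one two)
  finally show "cos_den c t * cos_poisson c t = cscale (1 - t^2) 1" .
  moreover have "cos_gen c t * cscale (2*t) (c 1) = cscale (2*t) (c 1) * cos_gen c t"
    by (simp add: cscale_mult_left[symmetric] cscale_mult_right[symmetric] cos_gen_commute[OF t])
  then have "cos_gen c t * cos_den c t = cos_den c t * cos_gen c t"
    by (simp add: cos_den_def algebra_simps cscale_one_mult mult_cscale_one)
  then have "cos_poisson c t * cos_den c t = cos_den c t * cos_poisson c t"
    by (simp add: cos_poisson_def left_diff_distrib right_diff_distrib)
  ultimately show "cos_poisson c t * cos_den c t = cscale (1 - t^2) 1" by simp
qed

lemma ainv_cos_den: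
  assumes t: "cmod t < 1"
  shows "alg_invertible (cos_den c t)" "ainv (cos_den c t) = cscale (1 / (1 - t^2)) (cos_poisson c t)"
proof -
  have "cos_den c t * cscale (1 / (1 - t^2)) (cos_poisson c t) = 1"
    "cscale (1 / (1 - t^2)) (cos_poisson c t) * cos_den c t = 1"
    using one_minus_square_nonzero[OF t]
    by (simp_all add: cscale_mult_left[symmetric] cscale_mult_right[symmetric]
        cos_den_mult_poisson[OF t] cscale_assoc cscale_one)
  then show "alg_invertible (cos_den c t)" "ainv (cos_den c t) = cscale (1 / (1 - t^2)) (cos_poisson c t)"
    unfolding alg_invertible_def by (auto intro: ainv_eq)
qed

end

lemma joukowski_preimage_in_disc:
  fixes l :: complex
  assumes "l \<notin> complex_of_real ` {-1..1}"
  obtains t where "cmod t < 1" "t \<noteq> 0" "l = (t + 1/t)/2"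
proof -
  define u where "u = l - csqrt (l^2 - 1)"
  define v where "v = l + csqrt (l^2 - 1)"
  have "csqrt (l^2 - 1) ^ 2 = l^2 - 1" by simp
  then have uv: "u * v = 1" unfolding u_def v_def by (simp add: power2_eq_square algebra_simps)
  then have nz: "u \<noteq> 0" "v \<noteq> 0" by auto
  have sum: "u + v = 2 * l" by (simp add: u_def v_def)
  have "1/u = v" "1/v = u" using uv nz by (simp_all add: divide_eq_eq mult.commute)
  with sum have lu: "l = (u + 1/u)/2" and lv: "l = (v + 1/v)/2" by (simp_all add: add.commute)
  have "cmod u < 1 \<or> cmod v < 1"
  proof (rule ccontr)
    assume "\<not> ?thesis"
    then have ge: "1 \<le> cmod u" "1 \<le> cmod v" by auto
    have prod: "cmod u * cmod v = 1" using uv by (simp flip: norm_mult)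
    have "cmod u * 1 \<le> cmod u * cmod v" using ge by (intro mult_left_mono) auto
    with ge prod have u1: "cmod u = 1" by simp
    then have "u * cnj u = u * v" using uv complex_norm_square[of u] by simp
    with nz have "cnj u = v" by simp
    with sum complex_add_cnj[of u] have "l = complex_of_real (Re u)" by simp
    moreover have "Re u \<in> {-1..1}" using abs_Re_le_cmod[of u] u1 by (simp add: abs_le_iff)
    ultimately show False using assms by blast
  qed
  then show thesis using that nz lu lv by blast
qed

lemma spec_cosine_seq_1_subset:
  fixes c :: "int \<Rightarrow> 'a::complex_banach_algebra_1"
  assumes c: "cosine_seq c" and bounded: "\<And>k::nat. norm (c (int k)) \<le> K"
  shows "spec (c 1) \<subseteq> complex_of_real ` {-1..1}"
proof
  fix l assume l: "l \<in> spec (c 1)"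
  show "l \<in> complex_of_real ` {-1..1}"
  proof (rule ccontr)
    assume "l \<notin> complex_of_real ` {-1..1}"
    then obtain t where t: "cmod t < 1" "t \<noteq> 0" "l = (t + 1/t)/2"
      by (rule joukowski_preimage_in_disc)
    have "alg_invertible (cscale (2*t) (cscale ((t + 1/t)/2) 1 - c 1))"
      using ainv_cos_den(1)[OF c bounded t(1)] cos_den_eq_cscale[OF t(2), of c] by simp
    with l t show False by (simp add: spec_def alg_invertible_cscale_iff)
  qed
qed

lemma spec_cosine_seq_subset:
  fixes c :: "int \<Rightarrow> 'a::complex_banach_algebra_1"
  assumes c: "cosine_seq c" and "\<forall>n\<ge>1. norm (c n) \<le> M"
  shows "spec (c (int n)) \<subseteq> complex_of_real ` {-1..1}"
proof -
  have "spec ((\<lambda>k. c (k * int n)) 1) \<subseteq> complex_of_real ` {-1..1}"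
    by (rule spec_cosine_seq_1_subset[OF cosine_seq_dilate[OF c], where K="max M 1"])
       (rule norm_cosine_seq_le_max[OF assms])
  then show ?thesis by simp
qed

section \<open>A singular point of \<open>cos_den\<close> on the unit circle\<close>

lemma sum_powers_root_of_unity:
  fixes z :: complex
  assumes z: "\<And>k. z ^ k = 1 \<longleftrightarrow> N dvd k"
  shows "(\<Sum>j<N. (z ^ j) ^ k) = (if N dvd k then of_nat N else 0)"
proof -
  have "(\<Sum>j<N. (z ^ j) ^ k) = (\<Sum>j<N. (z ^ k) ^ j)" by (simp add: mult.commute flip: power_mult)
  also have "\<dots> = (if z ^ k = 1 then of_nat N else (1 - (z^k)^N) / (1 - z^k))" by (rule sum_gp_strict)
  also have "(z^k)^N = 1" by (simp add: z flip: power_mult)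
  finally show ?thesis by (simp add: z)
qed

lemma primitive_root_of_unity_exists:
  assumes N: "N > 0"
  obtains z :: complex where "\<And>k. z ^ k = 1 \<longleftrightarrow> N dvd k"
proof
  fix k
  have "exp (2 * of_real pi * \<i> / of_nat N) ^ k = exp (2 * of_real pi * \<i> * of_nat k / of_nat N)"
    by (simp add: mult_ac flip: exp_of_nat_mult)
  then show "exp (2 * of_real pi * \<i> / of_nat N) ^ k = 1 \<longleftrightarrow> N dvd k"
    using complex_root_unity_eq_1[of N k] N by simp
qed

context
  fixes c :: "int \<Rightarrow> 'a::complex_banach_algebra_1" and K :: real
  assumes c: "cosine_seq c" and bounded: "\<And>k::nat. norm (c (int k)) \<le> K"
begin

lemma cos_gen_root_average_sums:
  assumes r: "0 < r" "r < 1" and N: "N > 0" and z: "\<And>k. z ^ k = 1 \<longleftrightarrow> N dvd k"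
  shows "(\<lambda>k. if N dvd k then cscale (of_real (r^k)) (c (int k)) else 0)
    sums scaleR (1 / real N) (\<Sum>j<N. cos_gen c (of_real r * z^j))"
proof -
  have "cmod z = 1" using power_eq_1_iff[of z N] z N by simp
  with r have small: "cmod (of_real r * z^j) < 1" for j by (simp add: norm_mult norm_power)
  have "(\<lambda>k. \<Sum>j<N. cscale ((of_real r * z^j)^k) (c (int k))) sums (\<Sum>j<N. cos_gen c (of_real r * z^j))"
    by (rule sums_sum) (rule cos_gen_sums[OF c bounded small])
  then have "(\<lambda>k. scaleR (1 / real N) (\<Sum>j<N. cscale ((of_real r * z^j)^k) (c (int k))))
      sums scaleR (1 / real N) (\<Sum>j<N. cos_gen c (of_real r * z^j))"
    by (rule bounded_linear.sums[OF bounded_linear_scaleR_right])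
  moreover have "scaleR (1 / real N) (\<Sum>j<N. cscale ((of_real r * z^j)^k) (c (int k)))
      = (if N dvd k then cscale (of_real (r^k)) (c (int k)) else 0)" for k
  proof -
    have "(\<Sum>j<N. (of_real r * z^j)^k) = of_real (r^k) * (\<Sum>j<N. (z^j)^k)"
      by (simp add: power_mult_distrib sum_distrib_left)
    then show ?thesis
      using N by (simp add: sum_powers_root_of_unity[OF z] scaleR_cscale flip: cscale_sum_left)
  qed
  ultimately show ?thesis by simp
qed

lemma cos_gen_root_average:
  assumes r: "0 < r" "r < 1" and N: "N > 0" and z: "\<And>k. z ^ k = 1 \<longleftrightarrow> N dvd k"
  shows "norm (scaleR (1 / real N) (\<Sum>j<N. cos_gen c (of_real r * z^j)) - 1)
           \<le> K * sqrt r ^ N / (1 - sqrt r)"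
proof -
  define u where "u k = (if N dvd k then cscale (of_real (r^k)) (c (int k)) else 0)" for k
  have "u 0 = 1" by (simp add: u_def cosine_seq_0[OF c] cscale_one)
  with cos_gen_root_average_sums[OF assms] have s: "(\<lambda>k. u (Suc k))
      sums (scaleR (1 / real N) (\<Sum>j<N. cos_gen c (of_real r * z^j)) - 1)"
    by (subst sums_Suc_iff) (simp add: u_def[abs_def])
  define \<rho> where "\<rho> = sqrt r"
  have \<rho>: "0 < \<rho>" "\<rho> < 1" "r = \<rho> * \<rho>" using r by (auto simp: \<rho>_def)
  have K: "K \<ge> 0" using bounded[of 0] norm_ge_zero order_trans by blast
  have g: "(\<lambda>k. K * \<rho>^N * \<rho>^k) sums (K * \<rho>^N * (1 / (1 - \<rho>)))"
    by (rule sums_mult[OF geometric_sums]) (use \<rho> in simp)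
  have "norm (u (Suc k)) \<le> K * \<rho>^N * \<rho>^k" for k
  proof (cases "N dvd Suc k")
    case True
    then have "N \<le> Suc k" by (simp add: dvd_imp_le)
    have "r ^ Suc k = \<rho> ^ Suc k * \<rho> ^ Suc k" by (simp only: \<rho>(3) power_mult_distrib)
    also have "\<dots> \<le> \<rho> ^ N * \<rho> ^ k"
      by (intro mult_mono power_decreasing) (use \<rho> \<open>N \<le> Suc k\<close> in auto)
    finally have "r ^ Suc k * norm (c (int (Suc k))) \<le> \<rho> ^ N * \<rho> ^ k * K"
      by (intro mult_mono bounded) (use r \<rho> in auto)
    then show ?thesis using True r by (simp add: u_def norm_cscale norm_mult norm_power mult_ac)
  qed (use K \<rho> in \<open>simp add: u_def\<close>)
  from norm_sums_le[OF s g this] show ?thesis by (simp add: \<rho>_def)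
qed

lemma cos_poisson_root_average:
  assumes r: "0 < r" "r < 1" and N: "N > 0" and z: "\<And>k. z ^ k = 1 \<longleftrightarrow> N dvd k"
  shows "norm (scaleR (1 / real N) (\<Sum>j<N. cos_poisson c (of_real r * z^j)) - 1)
           \<le> 2 * (K * sqrt r ^ N / (1 - sqrt r))"
proof -
  define G where "G = (\<Sum>j<N. cos_gen c (of_real r * z^j))"
  have "(\<Sum>j<N. cos_poisson c (of_real r * z^j)) = 2 *\<^sub>R G - real N *\<^sub>R 1"
    unfolding G_def cos_poisson_def
    by (simp only: sum_subtractf scaleR_sum_right sum_constant_scaleR card_lessThan)
  then have "scaleR (1 / real N) (\<Sum>j<N. cos_poisson c (of_real r * z^j)) - 1
      = 2 *\<^sub>R (scaleR (1 / real N) G - 1)"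
    using N by (simp add: scaleR_diff_right scaleR_conv_of_real[of 2 "1::'a"])
  then show ?thesis using cos_gen_root_average[OF assms] by (simp add: G_def)
qed

end

lemma norm_average_less:
  fixes f :: "nat \<Rightarrow> 'a::real_normed_vector"
  assumes N: "N > 0" and f: "\<And>j. j < N \<Longrightarrow> norm (f j) < e"
  shows "norm (scaleR (1 / real N) (\<Sum>j<N. f j)) < e"
proof -
  have "norm (\<Sum>j<N. f j) < (\<Sum>j<N. e)"
    using N f by (intro le_less_trans[OF norm_sum] sum_strict_mono) auto
  then show ?thesis using N by (simp add: field_simps)
qed

definition cos_poisson_ext :: "(int \<Rightarrow> 'a::complex_banach_algebra_1) \<Rightarrow> complex \<Rightarrow> 'a" where
  "cos_poisson_ext c t = cscale (1 - t^2) 1 * ainv (cos_den c t)"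

context
  fixes c :: "int \<Rightarrow> 'a::complex_banach_algebra_1" and K :: real
  assumes c: "cosine_seq c" and bounded: "\<And>k::nat. norm (c (int k)) \<le> K"
begin

lemma alg_invertible_cos_den_off_circle:
  assumes "cmod t \<noteq> 1" shows "alg_invertible (cos_den c t)"
proof (cases "cmod t < 1")
  case True then show ?thesis by (rule ainv_cos_den(1)[OF c bounded])
next
  case False
  with assms have t: "t \<noteq> 0" "cmod (1/t) < 1" by (auto simp: norm_divide divide_less_eq_1)
  then show ?thesis
    using ainv_cos_den(1)[OF c bounded t(2)] cos_den_reciprocal[OF t(1), of c]
    by (simp add: alg_invertible_cscale_iff)
qed

lemma cos_poisson_ext_disc: "cmod t < 1 \<Longrightarrow> cos_poisson_ext c t = cos_poisson c t"
  using one_minus_square_nonzero[of t]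
  by (simp add: cos_poisson_ext_def ainv_cos_den(2)[OF c bounded] cscale_one_mult cscale_assoc cscale_one)

lemma cos_poisson_ext_outside:
  assumes t: "cmod t > 1"
  shows "cos_poisson_ext c t = - cos_poisson c (1/t)"
proof -
  have t0: "t \<noteq> 0" and t1: "cmod (1/t) < 1" using t by (auto simp: norm_divide divide_less_eq_1)
  have "1 - (1/t)^2 \<noteq> 0" by (rule one_minus_square_nonzero[OF t1])
  with t0 have "(1 - t^2) * (1/t^2 * (1 / (1 - (1/t)^2))) = -1"
    by (simp add: field_simps)
  moreover have "ainv (cos_den c t) = cscale (1/t^2 * (1 / (1 - (1/t)^2))) (cos_poisson c (1/t))"
    using cos_den_reciprocal[OF t0, of c] t0 ainv_cos_den[OF c bounded t1]
    by (simp add: ainv_cscale cscale_assoc)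
  ultimately show ?thesis
    by (simp add: cos_poisson_ext_def cscale_one_mult cscale_assoc cscale_minus_left cscale_one)
qed

lemma cos_poisson_ext_reflection:
  assumes w: "cmod w = 1" and r: "0 < r" "r < 1"
  shows "cos_poisson_ext c (w / of_real r) = - cos_poisson c (of_real r * cnj w)"
proof -
  have "w * cnj w = 1" "w \<noteq> 0" using w complex_norm_square[of w] by auto
  then have "1 / w = cnj w" by (simp add: divide_eq_eq mult.commute)
  then have "1 / (w / of_real r) = of_real r * cnj w" by (simp flip: \<open>1 / w = cnj w\<close>)
  moreover have "cmod (w / of_real r) > 1" using w r by (simp add: norm_divide field_simps)
  ultimately show ?thesis using cos_poisson_ext_outside by metis
qed

lemma continuous_on_cos_poisson_ext:
  assumes "\<And>t. cmod t = 1 \<Longrightarrow> alg_invertible (cos_den c t)"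
  shows "continuous_on UNIV (cos_poisson_ext c)"
proof -
  note continuous_cscale = bounded_linear.continuous_on[OF bounded_linear_cscale_left]
  have "continuous_on UNIV (cos_den c)"
    unfolding cos_den_def[abs_def]
    by (intro continuous_intros continuous_cscale)
  then have "continuous_on UNIV (\<lambda>t. ainv (cos_den c t))"
    by (rule continuous_on_ainv) (use assms alg_invertible_cos_den_off_circle in blast)
  then show ?thesis
    unfolding cos_poisson_ext_def[abs_def] by (intro continuous_intros continuous_cscale)
qed

end

lemma radius_near_one:
  fixes \<delta> :: real
  assumes "\<delta> > 0"
  obtains r where "0 < r" "r < 1" "1/r - r < \<delta>" "1/r < 2"
proof -
  have "eventually (\<lambda>r. r \<in> {0<..<1} \<and> 1/r - r < \<delta> \<and> 1/r < 2) (at_left (1::real))"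
  proof (intro eventually_conj eventually_at_left_real)
    have "((\<lambda>r. 1/r - r) \<longlongrightarrow> 0) (at_left (1::real))" by (auto intro!: tendsto_eq_intros)
    with assms show "eventually (\<lambda>r. 1/r - r < \<delta>) (at_left (1::real))"
      by (auto dest: order_tendstoD)
    have "((\<lambda>r. 1/r) \<longlongrightarrow> 1) (at_left (1::real))" by (auto intro!: tendsto_eq_intros)
    then show "eventually (\<lambda>r. 1/r < 2) (at_left (1::real))" by (rule order_tendstoD) simp
  qed simp
  then show thesis using that eventually_happens[of _ "at_left (1::real)"] by auto
qed

lemma one_less_norm_add:
  fixes a b :: "'a::real_normed_algebra_1"
  assumes "norm (a - 1) < 1/2" "norm (b - 1) < 1/2"
  shows "1 < norm (a + b)"
proof -
  have "(2::'a) = (a + b) - (a - 1) - (b - 1)" by (simp add: algebra_simps)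
  then have "norm (2::'a) \<le> norm (a + b - (a - 1)) + norm (b - 1)"
    by (metis norm_triangle_ineq4)
  also have "\<dots> \<le> norm (a + b) + norm (a - 1) + norm (b - 1)"
    by (intro add_right_mono norm_triangle_ineq4)
  finally show ?thesis using assms by simp
qed

context
  fixes c :: "int \<Rightarrow> 'a::complex_banach_algebra_1" and K :: real
  assumes c: "cosine_seq c" and bounded: "\<And>k::nat. norm (c (int k)) \<le> K"
begin

lemma norm_cos_poisson_add_reflection_less:
  assumes \<delta>: "\<And>x x'. x \<in> cball 0 2 \<Longrightarrow> x' \<in> cball 0 2 \<Longrightarrow> dist x' x < \<delta> \<Longrightarrow>
      dist (cos_poisson_ext c x') (cos_poisson_ext c x) < e"
    and w: "cmod w = 1" and r: "0 < r" "r < 1" "1/r - r < \<delta>" "1/r < 2"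
  shows "norm (cos_poisson c (of_real r * w) + cos_poisson c (of_real r * cnj w)) < e"
proof -
  have "of_real r * w - w / of_real r = w * complex_of_real (r - 1/r)"
    using r by (simp add: field_simps)
  then have "dist (of_real r * w) (w / of_real r) = \<bar>r - 1/r\<bar>"
    using w by (simp add: dist_norm norm_mult del: of_real_diff of_real_divide)
  also have "1 < 1/r" using r(1,2) by simp
  then have "\<bar>r - 1/r\<bar> < \<delta>" using r(2,3) by (simp add: abs_if)
  finally have "dist (cos_poisson_ext c (of_real r * w)) (cos_poisson_ext c (w / of_real r)) < e"
    using w r by (intro \<delta>) (simp_all add: norm_mult norm_divide field_simps)
  moreover have "cmod (of_real r * w) < 1" using w r by (simp add: norm_mult)
  ultimately show ?thesis
    using cos_poisson_ext_disc[OF c bounded] cos_poisson_ext_reflection[OF c bounded w r(1,2)]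
    by (simp add: dist_norm)
qed

text \<open>Otherwise \<open>cos_poisson_ext\<close> would be uniformly continuous near the unit circle. But
  averaged over the \<open>N\<close>-th roots of unity, the Poisson kernel is close to \<open>1\<close> at radius \<open>r\<close>,
  while by \<open>cos_poisson_ext_reflection\<close> it is close to \<open>-1\<close> at radius \<open>1/r\<close>.\<close>

lemma cos_den_singular_on_circle: "\<exists>t. cmod t = 1 \<and> \<not> alg_invertible (cos_den c t)"
proof (rule ccontr)
  assume "\<not> ?thesis"
  then have "continuous_on UNIV (cos_poisson_ext c)"
    by (intro continuous_on_cos_poisson_ext[OF c bounded]) blast
  then have "uniformly_continuous_on (cball 0 2) (cos_poisson_ext c)"
    by (rule compact_uniformly_continuous[OF continuous_on_subset]) auto
  then obtain \<delta> where "\<delta> > 0" and \<delta>: "\<And>x x'. x \<in> cball 0 2 \<Longrightarrow> x' \<in> cball 0 2 \<Longrightarrow>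
      dist x' x < \<delta> \<Longrightarrow> dist (cos_poisson_ext c x') (cos_poisson_ext c x) < 1/2"
    unfolding uniformly_continuous_on_def by (metis zero_less_divide_1_iff zero_less_numeral)
  obtain r where r: "0 < r" "r < 1" "1/r - r < \<delta>" "1/r < 2"
    using radius_near_one[OF \<open>\<delta> > 0\<close>] by blast
  have "((\<lambda>N. 2 * (K * sqrt r ^ N / (1 - sqrt r))) \<longlongrightarrow> 0) sequentially"
    using r by (auto intro!: tendsto_eq_intros LIMSEQ_power_zero)
  then have "eventually (\<lambda>N. 0 < N \<and> 2 * (K * sqrt r ^ N / (1 - sqrt r)) < 1/2) sequentially"
    by (intro eventually_conj eventually_gt_at_top order_tendstoD) auto
  then obtain N :: nat where N: "N > 0" and small: "2 * (K * sqrt r ^ N / (1 - sqrt r)) < 1/2"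
    using eventually_happens[of _ sequentially] by auto
  obtain z :: complex where z: "\<And>k. z ^ k = 1 \<longleftrightarrow> N dvd k"
    using primitive_root_of_unity_exists[OF N] by blast
  have cnj_z: "cnj z ^ k = 1 \<longleftrightarrow> N dvd k" for k by (simp add: z flip: complex_cnj_power)
  define avg where "avg w = scaleR (1 / real N) (\<Sum>j<N. cos_poisson c (of_real r * w ^ j))" for w
  have "norm (avg z - 1) < 1/2" "norm (avg (cnj z) - 1) < 1/2"
    using cos_poisson_root_average[OF c bounded r(1,2) N z]
      cos_poisson_root_average[OF c bounded r(1,2) N cnj_z] small
    unfolding avg_def by linarith+
  then have "1 < norm (avg z + avg (cnj z))" by (rule one_less_norm_add)
  moreover have "cmod (z ^ j) = 1" for j using power_eq_1_iff[of z N] z N by (simp add: norm_power)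
  then have "norm (cos_poisson c (of_real r * z ^ j) + cos_poisson c (of_real r * cnj z ^ j)) < 1/2" for j
    using norm_cos_poisson_add_reflection_less[OF \<delta> _ r, of "z ^ j"] by (simp add: complex_cnj_power)
  then have "norm (avg z + avg (cnj z)) < 1/2"
    unfolding avg_def sum.distrib[symmetric] scaleR_add_right[symmetric]
    by (rule norm_average_less[OF N])
  ultimately show False by simp
qed

end

section \<open>The bound \<open>M \<ge> 1\<close>\<close>

lemma of_real_mult_commute: "of_real r * x = x * (of_real r :: 'a::real_algebra_1)"
  by (simp add: of_real_def)

lemma cos_mult_Suc_Suc:
  fixes \<beta> :: real
  shows "cos (real (Suc (Suc n)) * \<beta>) = 2 * cos \<beta> * cos (real (Suc n) * \<beta>) - cos (real n * \<beta>)"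
proof -
  have "cos (real (Suc (Suc n)) * \<beta>) = cos (real (Suc n) * \<beta> + \<beta>)"
    and "cos (real n * \<beta>) = cos (real (Suc n) * \<beta> - \<beta>)" by (simp_all add: algebra_simps)
  then show ?thesis by (simp add: cos_add cos_diff)
qed

context
  fixes c :: "int \<Rightarrow> 'a::complex_banach_algebra_1" and \<beta> :: real
  assumes c: "cosine_seq c"
begin

text \<open>\<open>cos_quot n = (cos (n \<beta>) - c\<^sub>n) / (cos \<beta> - c\<^sub>1)\<close>, a polynomial in \<open>c\<^sub>1\<close>.\<close>

fun cos_quot :: "nat \<Rightarrow> 'a" where
  "cos_quot 0 = 0"
| "cos_quot (Suc 0) = 1"
| "cos_quot (Suc (Suc n)) = 2 * of_real (cos (real (Suc n) * \<beta>)) + 2 * c 1 * cos_quot (Suc n) - cos_quot n"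

lemma cos_quot_commute: "cos_quot n * c 1 = c 1 * cos_quot n"
proof (induction n rule: cos_quot.induct)
  case (3 n)
  then show ?case
    by (simp add: algebra_simps mult_2 mult_2_right of_real_mult_commute[of _ "c 1"] del: of_real_add)
qed simp_all

lemma cos_minus_cosine_seq_factor:
  "of_real (cos (real n * \<beta>)) - c (int n) = (of_real (cos \<beta>) - c 1) * cos_quot n"
proof (induction n rule: cos_quot.induct)
  case 1 then show ?case by (simp add: cosine_seq_0[OF c])
next
  case 2 then show ?case by simp
next
  case (3 n)
  define d where "d = c 1"
  define l where "l = (of_real (cos \<beta>) :: 'a)"
  define a1 where "a1 = (of_real (cos (real (Suc n) * \<beta>)) :: 'a)"
  define a0 where "a0 = (of_real (cos (real n * \<beta>)) :: 'a)"
  have a2: "of_real (cos (real (Suc (Suc n)) * \<beta>)) = 2 * l * a1 - a0"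
    by (simp only: cos_mult_Suc_Suc l_def a1_def a0_def of_real_mult of_real_diff of_real_numeral)
  have c2: "c (int (Suc (Suc n))) = 2 * d * c (int (Suc n)) - c (int n)"
    using cosine_seq_rec[OF c, of "int (Suc n)"] by (simp add: d_def algebra_simps)
  have "l * d = d * l" by (simp add: l_def of_real_mult_commute)
  then have ld: "l * (d * x) = d * (l * x)" for x by (simp add: mult.assoc[symmetric])
  have "of_real (cos (real (Suc (Suc n)) * \<beta>)) - c (int (Suc (Suc n)))
      = 2 * (l - d) * a1 + 2 * d * (a1 - c (int (Suc n))) - (a0 - c (int n))"
    unfolding a2 c2 by (simp add: algebra_simps)
  also have "\<dots> = 2 * (l - d) * a1 + 2 * d * ((l - d) * cos_quot (Suc n)) - (l - d) * cos_quot n"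
    using 3 by (simp add: l_def a1_def a0_def d_def)
  also have "\<dots> = (l - d) * (2 * a1 + 2 * d * cos_quot (Suc n) - cos_quot n)"
    by (simp add: algebra_simps mult_2 mult_2_right ld)
  finally show ?case by (simp add: l_def d_def a1_def)
qed

lemma abs_cos_mult_le_norm_cosine_seq:
  assumes "\<not> alg_invertible (of_real (cos \<beta>) - c 1)"
  shows "\<bar>cos (real n * \<beta>)\<bar> \<le> norm (c (int n))"
proof (rule ccontr)
  assume "\<not> ?thesis"
  then have "alg_invertible (cscale (complex_of_real (cos (real n * \<beta>))) 1 - c (int n))"
    by (intro alg_invertible_cscale_one_diff) simp
  then obtain y where y: "(of_real (cos (real n * \<beta>)) - c (int n)) * y = 1"
    "y * (of_real (cos (real n * \<beta>)) - c (int n)) = 1"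
    unfolding alg_invertible_def cscale_of_real_one by blast
  have "cos_quot n * (of_real (cos \<beta>) - c 1) = (of_real (cos \<beta>) - c 1) * cos_quot n"
    by (simp add: algebra_simps cos_quot_commute of_real_mult_commute)
  with y have "(of_real (cos \<beta>) - c 1) * (cos_quot n * y) = 1"
    "(y * cos_quot n) * (of_real (cos \<beta>) - c 1) = 1"
    unfolding cos_minus_cosine_seq_factor by (simp_all add: mult.assoc)
  then have "alg_invertible (of_real (cos \<beta>) - c 1)"
    unfolding alg_invertible_def using right_inverse_eq_left_inverse by metis
  with assms show False by simp
qed

end

lemma one_le_if_abs_cos_multiples_le:
  assumes "\<And>n::nat. n \<ge> 1 \<Longrightarrow> \<bar>cos (real n * \<beta>)\<bar> \<le> M"
  shows "1 \<le> M"
proof -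
  have "cos (2 * pi / real N) \<le> M" if N: "N \<ge> 2" for N :: nat
  proof -
    from N have "N > 0" by simp
    then obtain h k where hk: "0 < k" "k \<le> int N" "\<bar>of_int k * (\<beta> / (2*pi)) - of_int h\<bar> < 1 / real N"
      by (rule Dirichlet_approx)
    have "2 * pi * of_int (- h) + real (nat k) * \<beta> = 2 * pi * (of_int k * (\<beta> / (2*pi)) - of_int h)"
      using hk(1) by (simp add: field_simps)
    also have "\<bar>\<dots>\<bar> = 2 * pi * \<bar>of_int k * (\<beta> / (2*pi)) - of_int h\<bar>" by (simp add: abs_mult)
    also have "\<dots> \<le> 2 * pi * (1 / real N)" using hk(3) by (intro mult_left_mono) auto
    finally have "cos (2 * pi * (1 / real N)) \<le> cos (real (nat k) * \<beta>)"
      by (rule cos_monotone_aux) (use N in \<open>simp add: field_simps\<close>)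
    also have "\<dots> \<le> M" using assms[of "nat k"] hk(1) by linarith
    finally show ?thesis by simp
  qed
  moreover have "(\<lambda>N. cos (2 * pi / real N)) \<longlonglongrightarrow> 1"
    using tendsto_cos[OF lim_const_over_n[of "2 * pi"]] by simp
  ultimately show ?thesis
    by (intro tendsto_upperbound[of "\<lambda>N. cos (2 * pi / real N)" 1 sequentially])
       (auto simp: eventually_sequentially intro: exI[of _ 2])
qed

lemma cosine_seq_bound_ge_one:
  fixes c :: "int \<Rightarrow> 'a::complex_banach_algebra_1"
  assumes c: "cosine_seq c" and bounded: "\<forall>n\<ge>1. norm (c n) \<le> M"
  shows "1 \<le> M"
proof -
  obtain t where t: "cmod t = 1" "\<not> alg_invertible (cos_den c t)"
    using cos_den_singular_on_circle[OF c norm_cosine_seq_le_max[OF c bounded]] by blast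
  then have "t \<noteq> 0" "t * cnj t = 1" using complex_norm_square[of t] by auto
  then have "1/t = cnj t" by (simp add: divide_eq_eq mult.commute)
  then have "(t + 1/t) / 2 = complex_of_real (Re t)"
    using complex_add_cnj[of t] by simp
  moreover have "\<bar>Re t\<bar> \<le> 1" using abs_Re_le_cmod[of t] t by simp
  ultimately have "\<not> alg_invertible (of_real (cos (arccos (Re t))) - c 1)"
    using t cos_den_eq_cscale[OF \<open>t \<noteq> 0\<close>, of c] \<open>t \<noteq> 0\<close>
    by (simp add: alg_invertible_cscale_iff cscale_of_real_one cos_arccos_abs)
  note cos_le_norm = abs_cos_mult_le_norm_cosine_seq[OF c this]
  show ?thesis
  proof (rule one_le_if_abs_cos_multiples_le)
    fix n :: nat assume "n \<ge> 1"
    with bounded have "norm (c (int n)) \<le> M" by simp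
    with cos_le_norm[of n] show "\<bar>cos (real n * arccos (Re t))\<bar> \<le> M" by simp
  qed

qed

section \<open>The arcsine series\<close>

definition arcsin_deriv_coeff :: "nat \<Rightarrow> real" where
  "arcsin_deriv_coeff n = fact (2*n) / (4^n * (fact n)^2)"

lemma arcsin_deriv_coeff_nonneg: "arcsin_deriv_coeff n \<ge> 0"
  by (simp add: arcsin_deriv_coeff_def)

lemma arcsin_deriv_coeff_Suc:
  "arcsin_deriv_coeff (Suc n) = arcsin_deriv_coeff n * ((2 * real n + 1) / (2 * real n + 2))"
proof -
  have "fact (2 * Suc n) = (2 * real n + 2) * (2 * real n + 1) * (fact (2*n) :: real)"
    "(fact (Suc n) :: real) = (real n + 1) * fact n"
    by (simp_all add: algebra_simps)
  then have "arcsin_deriv_coeff (Suc n)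
      = arcsin_deriv_coeff n * ((2 * real n + 2) * (2 * real n + 1) / (4 * (real n + 1)^2))"
    by (simp add: arcsin_deriv_coeff_def field_simps power2_eq_square)
  also have "4 * (real n + 1)^2 = (2 * real n + 2) * (2 * real n + 2)"
    by (simp add: power2_eq_square algebra_simps)
  finally show ?thesis
    using nonzero_mult_divide_mult_cancel_left[of "2 * real n + 2" "2 * real n + 1" "2 * real n + 2"]
    by simp
qed

lemma arcsin_deriv_coeff_le_1: "arcsin_deriv_coeff n \<le> 1"
proof (induction n)
  case (Suc n)
  have "arcsin_deriv_coeff n * ((2 * real n + 1) / (2 * real n + 2)) \<le> arcsin_deriv_coeff n * 1"
    by (intro mult_left_mono arcsin_deriv_coeff_nonneg) simp
  with Suc.IH show ?case unfolding arcsin_deriv_coeff_Suc by linarith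
qed (simp add: arcsin_deriv_coeff_def)

lemma arcsin_deriv_coeff_eq_gbinomial: "((-1/2::real) gchoose n) * (-1)^n = arcsin_deriv_coeff n"
proof (induction n)
  case (Suc n)
  have "(-1/2) * ((-1/2::real) gchoose n)
      = real n * ((-1/2) gchoose n) + real (Suc n) * ((-1/2) gchoose Suc n)"
    by (rule gbinomial_mult_1)
  then have "((-1/2::real) gchoose Suc n) = - ((2 * real n + 1) / (2 * real n + 2)) * ((-1/2) gchoose n)"
    by (simp add: field_simps)
  then show ?case by (simp add: Suc.IH[symmetric] arcsin_deriv_coeff_Suc)
qed (simp add: arcsin_deriv_coeff_def)

lemma arcsin_coeff_mult: "arcsin_coeff n * real (2*n+1) = arcsin_deriv_coeff n"
proof -
  have "(2::real) ^ (2*n) = 4^n" by (simp add: power_mult)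
  then show ?thesis
    unfolding arcsin_coeff_def arcsin_deriv_coeff_def
    by (simp del: of_nat_add of_nat_mult of_nat_Suc)
qed

lemma arcsin_coeff_nonneg: "arcsin_coeff n \<ge> 0"
  by (simp add: arcsin_coeff_def)

lemma arcsin_deriv_coeff_sums:
  fixes x :: real assumes x: "\<bar>x\<bar> < 1"
  shows "(\<lambda>n. arcsin_deriv_coeff n * x^(2*n)) sums (1 / sqrt (1 - x^2))"
proof -
  have p: "1 - x^2 > 0" using x by (simp add: abs_square_less_1)
  have "\<bar>- (x^2)\<bar> < 1" using x by (simp add: abs_square_less_1)
  from gen_binomial_real[OF this, of "-1/2"]
  have "(\<lambda>n. ((-1/2) gchoose n) * (- (x^2))^n) sums (1 + (- (x^2))) powr (-1/2)" .
  moreover have "((-1/2) gchoose n) * (- (x^2))^n = arcsin_deriv_coeff n * x^(2*n)" for n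
  proof -
    have "(- (x^2))^n = (-1)^n * x^(2*n)" by (simp only: power_minus[of "x^2"] power_mult)
    then show ?thesis by (simp only: mult.assoc[symmetric] arcsin_deriv_coeff_eq_gbinomial)
  qed
  moreover have "(1 + (- (x^2))) powr (-1/2) = 1 / (1 - x^2) powr (1/2)"
    by (simp add: powr_minus_divide)
  moreover have "(1 - x^2) powr (1/2) = sqrt (1 - x^2)" using p by (simp add: powr_half_sqrt)
  ultimately show ?thesis by simp
qed

lemma arcsin_series_has_derivative:
  fixes x :: real assumes x: "\<bar>x\<bar> < 1"
  shows "summable (\<lambda>n. arcsin_coeff n * x^(2*n+1))"
    "((\<lambda>x. \<Sum>n. arcsin_coeff n * x^(2*n+1)) has_field_derivative (1 / sqrt (1 - x^2))) (at x)"
proof -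
  define r where "r = (1 + \<bar>x\<bar>) / 2"
  have r: "\<bar>x\<bar> < r" "r < 1" using x by (auto simp: r_def)
  have deriv: "((\<lambda>x. arcsin_coeff n * x^(2*n+1)) has_field_derivative (arcsin_deriv_coeff n * y^(2*n)))
      (at y within {-r..r})" for n y
    using DERIV_cmult[OF DERIV_pow[of "2*n+1" y], of "arcsin_coeff n"]
    by (simp flip: arcsin_coeff_mult add: mult.assoc has_field_derivative_at_within)
  have unif: "uniformly_convergent_on {-r..r} (\<lambda>n y. \<Sum>i<n. arcsin_deriv_coeff i * y^(2*i))"
  proof (rule Weierstrass_m_test'[where M="\<lambda>n. (r^2)^n"])
    fix n and y :: real assume "y \<in> {-r..r}"
    then have "\<bar>y\<bar>^(2*n) \<le> r^(2*n)" by (intro power_mono) auto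
    then have "arcsin_deriv_coeff n * \<bar>y\<bar>^(2*n) \<le> 1 * r^(2*n)"
      by (intro mult_mono arcsin_deriv_coeff_le_1) auto
    then show "norm (arcsin_deriv_coeff n * y^(2*n)) \<le> (r^2)^n"
      using arcsin_deriv_coeff_nonneg[of n] by (simp add: abs_mult power_abs power_mult)
  next
    show "summable (\<lambda>n. (r^2)^n)" using r by (intro summable_geometric) (simp add: abs_square_less_1)
  qed
  have "0 \<in> {-r..r}" "x \<in> interior {-r..r}" using r by auto
  note H = has_field_derivative_series'[OF convex_real_interval(5) deriv unif \<open>0 \<in> {-r..r}\<close> _ \<open>x \<in> interior {-r..r}\<close>]
  show "summable (\<lambda>n. arcsin_coeff n * x^(2*n+1))" using H(1) r by simp
  have "(\<Sum>n. arcsin_deriv_coeff n * x^(2*n)) = 1 / sqrt (1 - x^2)"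
    by (rule sums_unique[symmetric, OF arcsin_deriv_coeff_sums[OF x]])
  then show "((\<lambda>x. \<Sum>n. arcsin_coeff n * x^(2*n+1)) has_field_derivative (1 / sqrt (1 - x^2))) (at x)"
    using H(2) r by simp
qed

lemma arcsin_series_interior:
  fixes x :: real assumes x: "\<bar>x\<bar> < 1"
  shows "(\<lambda>n. arcsin_coeff n * x^(2*n+1)) sums arcsin x"
proof -
  define F where "F x = (\<Sum>n. arcsin_coeff n * x^(2*n+1))" for x :: real
  have "F x - arcsin x = F 0 - arcsin 0"
  proof (rule DERIV_isconst3[of "-1" 1 x 0 "\<lambda>y. F y - arcsin y"])
    fix y :: real assume y: "y \<in> {-1<..<1}"
    then have "((\<lambda>y. F y - arcsin y) has_field_derivative (1 / sqrt (1 - y^2) - inverse (sqrt (1 - y^2)))) (at y)"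
      unfolding F_def by (intro DERIV_diff arcsin_series_has_derivative(2) DERIV_arcsin) auto
    then show "((\<lambda>y. F y - arcsin y) has_field_derivative 0) (at y)" by (simp add: divide_inverse)
  qed (use x in auto)
  then have "F x = arcsin x" by (simp add: F_def)
  with arcsin_series_has_derivative(1)[OF x] show ?thesis unfolding F_def by (metis summable_sums)
qed

text \<open>At \<open>x = \<plusminus>1\<close> the series converges by Abel's theorem, here in the form of monotone
  convergence of the nonnegative coefficients.\<close>

lemma arcsin_coeff_partial_sum_le: "(\<Sum>n<N. arcsin_coeff n) \<le> pi/2"
proof (rule tendsto_upperbound)
  show "((\<lambda>x. \<Sum>n<N. arcsin_coeff n * x^(2*n+1)) \<longlongrightarrow> (\<Sum>n<N. arcsin_coeff n)) (at_left (1::real))"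
    by (auto intro!: tendsto_eq_intros)
  have "eventually (\<lambda>x. x \<in> {0<..<1}) (at_left (1::real))"
    by (rule eventually_at_left_real) simp
  then show "eventually (\<lambda>x. (\<Sum>n<N. arcsin_coeff n * x^(2*n+1)) \<le> pi/2) (at_left 1)"
  proof eventually_elim
    case (elim x)
    then have "(\<Sum>n<N. arcsin_coeff n * x^(2*n+1)) \<le> (\<Sum>n. arcsin_coeff n * x^(2*n+1))"
      using arcsin_series_interior[of x] arcsin_coeff_nonneg
      by (intro sum_le_suminf) (auto simp: sums_iff)
    also have "\<dots> = arcsin x" using elim arcsin_series_interior[of x] by (simp add: sums_iff)
    also have "\<dots> \<le> pi/2" using elim by (intro arcsin_ubound) auto
    finally show ?case .
  qed
qed simp

lemma arcsin_coeff_sums: "arcsin_coeff sums (pi/2)"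
proof -
  have summable: "summable arcsin_coeff"
    by (rule summableI_nonneg_bounded[OF arcsin_coeff_nonneg arcsin_coeff_partial_sum_le])
  have "(1::real) \<in> {-1..1}" by simp
  with continuous_on_arcsin' have "(arcsin \<longlongrightarrow> arcsin 1) (at 1 within {-1..1})"
    unfolding continuous_on_def by blast
  then have "(arcsin \<longlongrightarrow> pi/2) (at_left 1)" by (simp add: at_within_Icc_at_left)
  moreover have "eventually (\<lambda>x. x \<in> {0<..<1}) (at_left (1::real))"
    by (rule eventually_at_left_real) simp
  then have "eventually (\<lambda>x. arcsin x \<le> suminf arcsin_coeff) (at_left 1)"
  proof eventually_elim
    case (elim x)
    then have "arcsin x = (\<Sum>n. arcsin_coeff n * x^(2*n+1))"
      using arcsin_series_interior[of x] by (simp add: sums_iff)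
    also have "\<dots> \<le> suminf arcsin_coeff"
    proof (rule suminf_le)
      show "arcsin_coeff n * x^(2*n+1) \<le> arcsin_coeff n" for n
        using elim arcsin_coeff_nonneg[of n] by (intro mult_left_le power_le_one) auto
    qed (use elim arcsin_series_interior[of x] summable in \<open>auto simp: sums_iff\<close>)
    finally show ?case .
  qed
  ultimately have "pi/2 \<le> suminf arcsin_coeff" by (rule tendsto_upperbound) simp
  moreover have "suminf arcsin_coeff \<le> pi/2"
    by (rule suminf_le_const[OF summable arcsin_coeff_partial_sum_le])
  ultimately show ?thesis using summable by (simp add: sums_iff)
qed

lemma arcsin_series:
  fixes x :: real assumes x: "\<bar>x\<bar> \<le> 1"
  shows "(\<lambda>n. arcsin_coeff n * x^(2*n+1)) sums arcsin x"
proof -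
  consider "\<bar>x\<bar> < 1" | "x = 1" | "x = -1" using x by linarith
  then show ?thesis
  proof cases
    case 1 then show ?thesis by (rule arcsin_series_interior)
  next
    case 2 then show ?thesis using arcsin_coeff_sums by simp
  next
    case 3 then show ?thesis using sums_minus[OF arcsin_coeff_sums] by simp
  qed
qed

section \<open>Powers, \<open>arccos\<close> and characters\<close>

lemma norm_cosine_seq_power_mult_le:
  fixes c :: "int \<Rightarrow> 'a::real_normed_algebra_1"
  assumes c: "cosine_seq c" and bounded: "\<And>k. norm (c k) \<le> M"
  shows "norm (c n ^ p * c m) \<le> M"
proof (induction p arbitrary: m)
  case 0 then show ?case using bounded by simp
next
  case (Suc p)
  have "c n ^ Suc p * c m = c n ^ p * (c n * c m)" by (simp only: power_Suc2 mult.assoc)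
  also have "\<dots> = scaleR (1/2) (c n ^ p * c (n + m) + c n ^ p * c (n - m))"
    by (simp add: cosine_seq_mult[OF c] distrib_left)
  also have "norm \<dots> \<le> (1/2) * (norm (c n ^ p * c (n + m)) + norm (c n ^ p * c (n - m)))"
    by (simp add: norm_triangle_ineq)
  also have "\<dots> \<le> (1/2) * (M + M)" by (intro mult_left_mono add_mono Suc.IH) auto
  finally show ?case by simp
qed

lemma norm_cosine_seq_power_le:
  fixes c :: "int \<Rightarrow> 'a::complex_banach_algebra_1"
  assumes c: "cosine_seq c" and bounded: "\<forall>n\<ge>1. norm (c n) \<le> M"
  shows "norm (c n ^ p) \<le> M"
proof -
  have "norm (c k) \<le> M" for k
    using norm_cosine_seq_le_max[OF assms] cosine_seq_bound_ge_one[OF assms] by (simp add: max_def)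
  from norm_cosine_seq_power_mult_le[OF c this, of n p 0] show ?thesis
    by (simp add: cosine_seq_0[OF c])
qed

lemma summable_arcsin_series:
  fixes x :: "'a::{real_normed_algebra_1,banach}"
  assumes "\<And>p. p \<ge> 1 \<Longrightarrow> norm (x ^ p) \<le> C"
  shows "summable (\<lambda>k. arcsin_coeff k *\<^sub>R x ^ (2*k+1))"
proof (rule summable_comparison_test'[where N=0])
  show "summable (\<lambda>k. arcsin_coeff k * C)"
    using arcsin_coeff_sums by (intro summable_mult2) (rule sums_summable)
  show "norm (arcsin_coeff k *\<^sub>R x ^ (2*k+1)) \<le> arcsin_coeff k * C" for k
    using arcsin_coeff_nonneg[of k] assms[of "2*k+1"] by (simp add: mult_left_mono)
qed

lemma norm_ba_arccos_le:
  fixes x :: "'a::complex_banach_algebra_1"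
  assumes bounded: "\<And>p. p \<ge> 1 \<Longrightarrow> norm (x ^ p) \<le> C"
  shows "norm (ba_arccos x) \<le> (C + 1) / 2 * pi"
proof -
  have "norm (arcsin_coeff k *\<^sub>R x ^ (2*k+1)) \<le> arcsin_coeff k * C" for k
    using arcsin_coeff_nonneg[of k] bounded[of "2*k+1"] by (simp add: mult_left_mono)
  then have "norm (\<Sum>k. arcsin_coeff k *\<^sub>R x ^ (2*k+1)) \<le> (\<Sum>k. arcsin_coeff k * C)"
    using arcsin_coeff_sums by (intro norm_suminf_le summable_mult2) (auto simp: sums_iff)
  also have "\<dots> = pi/2 * C" using sums_mult2[OF arcsin_coeff_sums, of C] by (simp add: sums_iff)
  finally have *: "norm (\<Sum>k. arcsin_coeff k *\<^sub>R x ^ (2*k+1)) \<le> pi/2 * C" .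
  have "norm (ba_arccos x) \<le> norm (scaleR (pi/2) (1::'a)) + norm (\<Sum>k. arcsin_coeff k *\<^sub>R x ^ (2*k+1))"
    unfolding ba_arccos_def by (rule norm_triangle_ineq4)
  also have "\<dots> \<le> pi/2 + pi/2 * C" using * by simp
  finally show ?thesis by (simp add: field_simps)
qed

lemma character_ba_arccos:
  fixes x :: "'a::complex_banach_algebra_1"
  assumes chi: "character chi" and bounded: "\<And>p. p \<ge> 1 \<Longrightarrow> norm (x ^ p) \<le> C"
    and s: "chi x = of_real s" "\<bar>s\<bar> \<le> 1"
  shows "chi (ba_arccos x) = of_real (arccos s)"
proof -
  have "(\<lambda>k. chi (arcsin_coeff k *\<^sub>R x ^ (2*k+1))) sums chi (\<Sum>k. arcsin_coeff k *\<^sub>R x ^ (2*k+1))"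
    by (rule bounded_linear.sums[OF bounded_linear_character[OF chi]])
       (rule summable_sums[OF summable_arcsin_series[OF bounded]])
  moreover have "chi (arcsin_coeff k *\<^sub>R x ^ (2*k+1)) = of_real (arcsin_coeff k * s ^ (2*k+1))" for k
    by (simp only: character_scaleR[OF chi] character_power[OF chi] s(1) of_real_mult of_real_power)
  ultimately have "(\<lambda>k. of_real (arcsin_coeff k * s ^ (2*k+1))) sums chi (\<Sum>k. arcsin_coeff k *\<^sub>R x ^ (2*k+1))"
    by simp
  from sums_unique2[OF this sums_of_real[OF arcsin_series[OF s(2)]]]
  have "chi (\<Sum>k. arcsin_coeff k *\<^sub>R x ^ (2*k+1)) = of_real (arcsin s)" .
  then show ?thesis
    using s(2) unfolding ba_arccos_def
    by (simp add: character_diff[OF chi] character_scaleR[OF chi] character_one[OF chi] arccos_arcsin_eq)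
qed

lemma character_cosine_seq:
  fixes c :: "int \<Rightarrow> 'a::complex_banach_algebra_1"
  assumes chi: "character chi" and c: "cosine_seq c" and c1: "chi (c 1) = of_real (cos b)"
  shows "chi (c (int n)) = of_real (cos (real n * b))"
proof -
  have "chi (c (int n)) = of_real (cos (real n * b)) \<and>
      chi (c (int (Suc n))) = of_real (cos (real (Suc n) * b))"
  proof (induction n)
    case 0 then show ?case using c1 by (simp add: cosine_seq_0[OF c] character_one[OF chi])
  next
    case (Suc n)
    have "chi (2 * c 1 * c (int (Suc n))) = chi (c (int (Suc (Suc n)))) + chi (c (int n))"
      by (simp add: cosine_seq_rec[OF c] character_add[OF chi] add.commute)
    moreover have "chi (2 * c 1 * c (int (Suc n))) = 2 * of_real (cos b) * chi (c (int (Suc n)))"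
      using character_of_real[OF chi, of 2] by (simp add: character_mult[OF chi] c1)
    ultimately have "chi (c (int (Suc (Suc n)))) = 2 * of_real (cos b) * chi (c (int (Suc n))) - chi (c (int n))"
      by (simp add: algebra_simps)
    also have "\<dots> = of_real (2 * cos b * cos (real (Suc n) * b) - cos (real n * b))"
      using Suc.IH by simp
    also have "\<dots> = of_real (cos (real (Suc (Suc n)) * b))" by (simp only: cos_mult_Suc_Suc)
    finally show ?case using Suc.IH by simp
  qed
  then show ?thesis ..
qed

theorem proposition2p1:
  fixes c :: "int \<Rightarrow> 'a::complex_banach_algebra_1" and M :: real
  assumes "cosine_seq c"
    and "\<forall>n\<ge>1. norm (c n) \<le> M"
  shows "(\<forall>n\<ge>1. \<forall>p::nat\<ge>1. norm (c n ^ p) \<le> M)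
    \<and> (\<forall>n\<ge>1. norm (ba_arccos (c n)) \<le> (M + 1) / 2 * pi)
    \<and> (\<forall>n::nat. spec (c (int n)) \<subseteq> complex_of_real ` {-1..1})
    \<and> (\<forall>chi. character chi \<longrightarrow>
          (chi (c 1) \<in> complex_of_real ` {-1..1}
           \<and> chi (ba_arccos (c 1)) = complex_of_real (arccos (Re (chi (c 1))))
           \<and> arccos (Re (chi (c 1))) \<in> {0..pi}
           \<and> (\<forall>n::nat\<ge>1. chi (c (int n)) =
                 complex_of_real (cos (real n * arccos (Re (chi (c 1))))))))"
proof -
  note c = assms(1) and bounded = assms(2)
  note powers = norm_cosine_seq_power_le[OF c bounded]
  have "chi (c 1) \<in> complex_of_real ` {-1..1}
      \<and> chi (ba_arccos (c 1)) = complex_of_real (arccos (Re (chi (c 1))))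
      \<and> arccos (Re (chi (c 1))) \<in> {0..pi}
      \<and> (\<forall>n::nat\<ge>1. chi (c (int n)) = complex_of_real (cos (real n * arccos (Re (chi (c 1))))))"
    if chi: "character chi" for chi
  proof -
    have real: "chi (c 1) \<in> complex_of_real ` {-1..1}"
      using character_in_spec[OF chi] spec_cosine_seq_subset[OF c bounded, of 1] by auto
    then obtain s where s: "chi (c 1) = of_real s" "\<bar>s\<bar> \<le> 1" by auto
    then have "chi (c 1) = of_real (cos (arccos s))" by simp
    with s real show ?thesis
      using character_ba_arccos[OF chi powers s] character_cosine_seq[OF chi c]
      by (auto simp: arccos_lbound arccos_ubound)
  qed
  then show ?thesis
    using powers norm_ba_arccos_le[OF powers] spec_cosine_seq_subset[OF c bounded] by auto
qed

end
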